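(* Let $\epsilon>0$, $r>0$, $r_1=(1+\epsilon)r$, let $\alpha$ be a real number with $0<\alpha<1$, and let $N$ be an integer with $N>\frac{5}{\alpha^2\epsilon}$. Then there exist $N$ open subsets $W_1,\dots,W_N$ of $\Delta_{r_1}$ such that $\mathrm{diam}_{r_1}(W_i)\le\alpha$ for every $i$ and $\Delta_r\subset\bigcup_{i=1}^NW_i$.
   Context: $\Delta_\rho$ is the open disk in $\mathbf C$ centered at $0$ of radius $\rho$. On $\Delta_{r_1}$, $d_{r_1}(z,w)=\left|\frac{r_1(z-w)}{r_1^2-z\overline w}\right|$ (a distance), and for $W\subset\Delta_{r_1}$, $\mathrm{diam}_{r_1}(W)=\sup\{d_{r_1}(z,w):z,w\in W\}$. *)

theory Defs
  imports "HOL-Analysis.Analysis"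
begin

definition disk_dist :: "real \<Rightarrow> complex \<Rightarrow> complex \<Rightarrow> real" where
  "disk_dist r1 z w = cmod (of_real r1 * (z - w) / (of_real (r1^2) - z * cnj w))"

text \<open>Diameter w.r.t. disk_dist: supremum of pairwise distances
  (the empty set gets diameter 0 by convention).\<close>
definition disk_diam :: "real \<Rightarrow> complex set \<Rightarrow> real" where
  "disk_diam r1 W = Sup (insert 0 {disk_dist r1 z w | z w. z \<in> W \<and> w \<in> W})"

end

theory Submission
  imports Defs
begin

(* Scaling by r1 turns diam_r1 into the pseudo-hyperbolic diameter of the unit disk.  With
   x = (1 - |u|) / (1 + |u|) = exp (- d), d the hyperbolic distance from 0 to u, the disk
   |u| < r / r1 minus the central piece |u| < 2 alpha / 5 is the range x0 < x <= xc with
   x0 = eps / (2 + eps).  It is cut into hyperbolic annuli y < x <= l y, l = (2 + alpha) / (2 - alpha),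
   and the annulus at level y into sector_count alpha y congruent sectors.  By the polar identities
     |u - v|^2 = (|u| - |v|)^2 + |u| |v| |sgn u - sgn v|^2,
     |1 - u cnj v|^2 = (1 - |u| |v|)^2 + |u| |v| |sgn u - sgn v|^2
   the radial and the angular variation inside a sector use up at most 9/25 and 16/25 of alpha^2.
   The count is a telescoping budget: with G y = 5 (1 - y) / (2 alpha^2 y), the sectors at level y
   together with G (l y) cost at most G y, so all annuli together cost at most G x0 = 5 / (alpha^2 eps). *)

section \<open>Pseudo-hyperbolic diameter\<close>

definition pseudo_diam_le :: "real \<Rightarrow> complex set \<Rightarrow> bool" where
  "pseudo_diam_le \<alpha> S \<longleftrightarrow> (\<forall>u\<in>S. \<forall>v\<in>S. cmod (u - v) \<le> \<alpha> * cmod (1 - u * cnj v))"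

lemma disk_dist_scaleR:
  assumes "r1 \<noteq> 0"
  shows "disk_dist r1 (r1 *\<^sub>R u) (r1 *\<^sub>R v) = cmod (u - v) / cmod (1 - u * cnj v)"
proof -
  have "of_real r1 * (r1 *\<^sub>R u - r1 *\<^sub>R v) / (of_real (r1\<^sup>2) - r1 *\<^sub>R u * cnj (r1 *\<^sub>R v))
      = of_real (r1\<^sup>2) * (u - v) / (of_real (r1\<^sup>2) * (1 - u * cnj v))"
    by (simp add: scaleR_conv_of_real power2_eq_square algebra_simps)
  also have "\<dots> = (u - v) / (1 - u * cnj v)"
    using assms by simp
  finally show ?thesis
    unfolding disk_dist_def by (simp only: norm_divide)
qed

lemma disk_diam_scaleR_le:
  assumes "r1 \<noteq> 0" and "0 \<le> \<alpha>" and "pseudo_diam_le \<alpha> S"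
  shows "disk_diam r1 ((*\<^sub>R) r1 ` S) \<le> \<alpha>"
  unfolding disk_diam_def
proof (rule cSup_least)
  fix d assume "d \<in> insert 0 {disk_dist r1 z w |z w. z \<in> (*\<^sub>R) r1 ` S \<and> w \<in> (*\<^sub>R) r1 ` S}"
  then consider "d = 0" | u v where "u \<in> S" "v \<in> S" "d = cmod (u - v) / cmod (1 - u * cnj v)"
    using disk_dist_scaleR[OF assms(1)] by blast
  then show "d \<le> \<alpha>"
  proof cases
    case 2
    then show ?thesis
      using assms(2,3) by (cases "1 - u * cnj v = 0") (auto simp: pseudo_diam_le_def divide_le_eq)
  qed (use assms(2) in simp)
qed simp

lemma disk_diam_empty [simp]: "disk_diam r1 {} = 0"
  by (simp add: disk_diam_def)

lemma scaleR_image_subset_ball: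
  fixes S :: "'a::real_normed_vector set"
  assumes "0 < c" and "S \<subseteq> ball 0 1"
  shows "(*\<^sub>R) c ` S \<subseteq> ball 0 c"
proof (rule image_subsetI)
  fix u assume "u \<in> S"
  then have "norm u < 1"
    using assms(2) by auto
  then show "c *\<^sub>R u \<in> ball 0 c"
    using assms(1) by simp
qed

lemma ball_subset_scaleR_image:
  fixes A :: "'a::real_normed_vector set"
  assumes "0 < c" and "ball 0 (r / c) \<subseteq> A"
  shows "ball 0 r \<subseteq> (*\<^sub>R) c ` A"
proof
  fix z :: 'a assume "z \<in> ball 0 r"
  then have "z /\<^sub>R c \<in> ball 0 (r / c)"
    using assms(1) by (simp add: field_simps)
  then have "z /\<^sub>R c \<in> A"
    using assms(2) by blast
  moreover have "z = c *\<^sub>R (z /\<^sub>R c)"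
    using assms(1) by simp
  ultimately show "z \<in> (*\<^sub>R) c ` A"
    by (rule rev_image_eqI)
qed

lemma pseudo_diam_le_ball:
  assumes "0 \<le> \<alpha>" and "0 \<le> c" and "2 * c \<le> \<alpha> * (1 - c\<^sup>2)"
  shows "pseudo_diam_le \<alpha> (ball 0 c)"
  unfolding pseudo_diam_le_def
proof (intro ballI)
  fix u v :: complex assume "u \<in> ball 0 c" "v \<in> ball 0 c"
  then have uv: "cmod u < c" "cmod v < c"
    by auto
  have "cmod (u - v) \<le> 2 * c"
    using norm_triangle_ineq4[of u v] uv by linarith
  also have "\<dots> \<le> \<alpha> * (1 - c\<^sup>2)"
    by fact
  also have "\<dots> \<le> \<alpha> * cmod (1 - u * cnj v)"
  proof (rule mult_left_mono[OF _ assms(1)])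
    have "cmod (u * cnj v) \<le> c\<^sup>2"
      using uv by (simp add: norm_mult power2_eq_square mult_mono')
    then show "1 - c\<^sup>2 \<le> cmod (1 - u * cnj v)"
      using norm_triangle_ineq2[of 1 "u * cnj v"] by (simp add: norm_minus_commute)
  qed
  finally show "cmod (u - v) \<le> \<alpha> * cmod (1 - u * cnj v)" .
qed

lemma pseudo_diam_le_central_ball:
  assumes "0 < \<alpha>" and "\<alpha> < 1"
  shows "pseudo_diam_le \<alpha> (ball 0 (2/5 * \<alpha>))"
proof (rule pseudo_diam_le_ball)
  have "0 \<le> \<alpha> * (5 - 4 * \<alpha>\<^sup>2)"
    using assms power_le_one[of \<alpha> 2] by (intro mult_nonneg_nonneg) auto
  moreover have "\<alpha> * (1 - (2/5 * \<alpha>)\<^sup>2) - 2 * (2/5 * \<alpha>) = \<alpha> * (5 - 4 * \<alpha>\<^sup>2) / 25"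
    by (simp add: power2_eq_square field_simps)
  ultimately show "2 * (2/5 * \<alpha>) \<le> \<alpha> * (1 - (2/5 * \<alpha>)\<^sup>2)"
    by linarith
qed (use assms in auto)

lemma polar_norm_identities:
  fixes u1 u2 :: complex
  defines "p \<equiv> cmod u1 * cmod u2" and "D \<equiv> (cmod (sgn u1 - sgn u2))\<^sup>2"
  shows "(cmod (u1 - u2))\<^sup>2 = (cmod u1 - cmod u2)\<^sup>2 + p * D"
    and "(cmod (1 - u1 * cnj u2))\<^sup>2 = (1 - p)\<^sup>2 + p * D"
proof -
  have "(cmod (u1 - u2))\<^sup>2 = (cmod u1 - cmod u2)\<^sup>2 + p * D
      \<and> (cmod (1 - u1 * cnj u2))\<^sup>2 = (1 - p)\<^sup>2 + p * D"
  proof (cases "u1 = 0 \<or> u2 = 0")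
    case True
    then show ?thesis
      by (auto simp: p_def D_def)
  next
    case False
    define t1 where "t1 = cmod u1"
    define t2 where "t2 = cmod u2"
    define v1 where "v1 = sgn u1"
    define v2 where "v2 = sgn u2"
    have u: "u1 = of_real t1 * v1" "u2 = of_real t2 * v2"
      using False by (simp_all add: t1_def t2_def v1_def v2_def complex_sgn_def scaleR_conv_of_real)
    have "cmod v1 = 1" "cmod v2 = 1"
      using False by (simp_all add: v1_def v2_def norm_sgn)
    then have v: "(Re v1)\<^sup>2 + (Im v1)\<^sup>2 = 1" "(Re v2)\<^sup>2 + (Im v2)\<^sup>2 = 1"
      by (simp_all flip: cmod_power2)
    have "(cmod (of_real t1 * v1 - of_real t2 * v2))\<^sup>2 = (t1 - t2)\<^sup>2 + t1 * t2 * (cmod (v1 - v2))\<^sup>2"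
      unfolding cmod_power2 using v by (simp add: power2_eq_square algebra_simps) (use v in algebra)
    moreover have "(cmod (1 - of_real t1 * v1 * cnj (of_real t2 * v2)))\<^sup>2
        = (1 - t1 * t2)\<^sup>2 + t1 * t2 * (cmod (v1 - v2))\<^sup>2"
      unfolding cmod_power2 using v by (simp add: power2_eq_square algebra_simps) (use v in algebra)
    ultimately show ?thesis
      by (simp only: p_def D_def flip: t1_def t2_def v1_def v2_def u)
  qed
  then show "(cmod (u1 - u2))\<^sup>2 = (cmod u1 - cmod u2)\<^sup>2 + p * D"
    and "(cmod (1 - u1 * cnj u2))\<^sup>2 = (1 - p)\<^sup>2 + p * D"
    by auto
qed

lemma pseudo_dist_le_of_polar_bounds:
  fixes u1 u2 :: complex
  defines "p \<equiv> cmod u1 * cmod u2"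
  assumes "0 \<le> \<alpha>" and "\<alpha> \<le> 1" and "a\<^sup>2 + (1 - \<alpha>\<^sup>2) * b\<^sup>2 \<le> \<alpha>\<^sup>2"
    and radial: "(cmod u1 - cmod u2)\<^sup>2 \<le> a\<^sup>2 * (1 - p)\<^sup>2"
    and angular: "p * (cmod (sgn u1 - sgn u2))\<^sup>2 \<le> b\<^sup>2 * (1 - p)\<^sup>2"
  shows "cmod (u1 - u2) \<le> \<alpha> * cmod (1 - u1 * cnj u2)"
proof -
  define D where "D = (cmod (sgn u1 - sgn u2))\<^sup>2"
  have "(1 - \<alpha>\<^sup>2) * (p * D) \<le> (1 - \<alpha>\<^sup>2) * (b\<^sup>2 * (1 - p)\<^sup>2)"
    using angular assms(2,3) by (intro mult_left_mono) (auto simp: D_def power_le_one)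
  then have h1: "p * D - \<alpha>\<^sup>2 * (p * D) \<le> b\<^sup>2 * (1 - p)\<^sup>2 - \<alpha>\<^sup>2 * (b\<^sup>2 * (1 - p)\<^sup>2)"
    by (simp only: left_diff_distrib mult_1)
  have "(a\<^sup>2 + (1 - \<alpha>\<^sup>2) * b\<^sup>2) * (1 - p)\<^sup>2 \<le> \<alpha>\<^sup>2 * (1 - p)\<^sup>2"
    using assms(4) by (intro mult_right_mono) auto
  then have h2: "a\<^sup>2 * (1 - p)\<^sup>2 + (b\<^sup>2 * (1 - p)\<^sup>2 - \<alpha>\<^sup>2 * (b\<^sup>2 * (1 - p)\<^sup>2)) \<le> \<alpha>\<^sup>2 * (1 - p)\<^sup>2"
    by (simp only: distrib_right left_diff_distrib mult_1 mult.assoc)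
  have "(cmod u1 - cmod u2)\<^sup>2 + p * D \<le> \<alpha>\<^sup>2 * (1 - p)\<^sup>2 + \<alpha>\<^sup>2 * (p * D)"
    using radial h1 h2 by linarith
  then have "(cmod (u1 - u2))\<^sup>2 \<le> (\<alpha> * cmod (1 - u1 * cnj u2))\<^sup>2"
    unfolding power_mult_distrib polar_norm_identities[of u1 u2, folded p_def D_def]
    by (simp only: distrib_left)
  then show ?thesis
    by (rule power2_le_imp_le) (simp add: assms(2))
qed

section \<open>The radial coordinate\<close>

definition radial_coord :: "real \<Rightarrow> real" where
  "radial_coord t = (1 - t) / (1 + t)"

lemma radial_coord_radial_coord: "0 \<le> t \<Longrightarrow> radial_coord (radial_coord t) = t"
  by (simp add: radial_coord_def field_simps)

lemma radial_coord_less_iff: "0 \<le> s \<Longrightarrow> 0 \<le> t \<Longrightarrow> radial_coord s < radial_coord t \<longleftrightarrow> t < s"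
  by (simp add: radial_coord_def field_simps)

lemma radial_coord_pos_iff: "0 \<le> t \<Longrightarrow> 0 < radial_coord t \<longleftrightarrow> t < 1"
  by (simp add: radial_coord_def zero_less_divide_iff)

lemma radial_coord_le_1: "0 \<le> t \<Longrightarrow> radial_coord t \<le> 1"
  by (simp add: radial_coord_def)

lemma radial_coord_bounds:
  assumes "0 < \<rho>" and "\<rho> < 1"
  shows "0 < radial_coord \<rho>" and "radial_coord \<rho> < 1"
  using assms by (simp_all add: radial_coord_def)

lemma radial_coord_diff:
  "-1 < x1 \<Longrightarrow> -1 < x2 \<Longrightarrow> radial_coord x1 - radial_coord x2 = 2 * (x2 - x1) / ((1 + x1) * (1 + x2))"
  by (simp add: radial_coord_def field_simps)

lemma one_minus_radial_coord_mult:
  "-1 < x1 \<Longrightarrow> -1 < x2 \<Longrightarrow> 1 - radial_coord x1 * radial_coord x2 = 2 * (x1 + x2) / ((1 + x1) * (1 + x2))"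
  unfolding radial_coord_def by (simp add: divide_simps) (simp add: algebra_simps)

lemma abs_radial_coord_diff_le:
  assumes "0 < x1" and "0 < x2" and "\<bar>x1 - x2\<bar> \<le> a * (x1 + x2)"
  shows "\<bar>radial_coord x1 - radial_coord x2\<bar> \<le> a * (1 - radial_coord x1 * radial_coord x2)"
proof -
  have "\<bar>radial_coord x1 - radial_coord x2\<bar> = \<bar>2 * (x2 - x1)\<bar> / ((1 + x1) * (1 + x2))"
    using assms(1,2) by (simp add: radial_coord_diff abs_divide)
  also have "\<dots> = 2 * \<bar>x1 - x2\<bar> / ((1 + x1) * (1 + x2))"
    by (simp only: abs_mult abs_minus_commute)
  also have "\<dots> \<le> 2 * (a * (x1 + x2)) / ((1 + x1) * (1 + x2))"
    using assms by (intro divide_right_mono) auto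
  also have "\<dots> = a * (1 - radial_coord x1 * radial_coord x2)"
    using assms(1,2) by (simp add: one_minus_radial_coord_mult)
  finally show ?thesis .
qed

lemma radial_coord_mult_le:
  assumes "0 < y" and "y < x1" and "x1 \<le> 1" and "y < x2" and "x2 \<le> 1"
  shows "16 * y\<^sup>2 * (radial_coord x1 * radial_coord x2)
    \<le> ((1 - radial_coord x1 * radial_coord x2) * (1 - y\<^sup>2))\<^sup>2"
proof -
  define Q where "Q = (1 + x1) * (1 + x2)"
  have Q: "0 < Q"
    using assms by (simp add: Q_def)
  have "(2 * y)\<^sup>2 \<le> (x1 + x2)\<^sup>2"
    using assms by (intro power_mono) auto
  moreover have "(1 - x1\<^sup>2) * (1 - x2\<^sup>2) \<le> (1 - y\<^sup>2) * (1 - y\<^sup>2)"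
    using assms by (intro mult_mono) (auto intro!: power_strict_mono less_imp_le simp: power_le_one)
  ultimately have "(2 * y)\<^sup>2 * ((1 - x1\<^sup>2) * (1 - x2\<^sup>2)) \<le> (x1 + x2)\<^sup>2 * ((1 - y\<^sup>2) * (1 - y\<^sup>2))"
    using assms by (intro mult_mono) (auto simp: power_le_one)
  then have key: "16 * y\<^sup>2 * ((1 - x1) * (1 - x2)) * Q \<le> (2 * (x1 + x2) * (1 - y\<^sup>2))\<^sup>2"
    by (simp add: Q_def power2_eq_square algebra_simps)
  have "16 * y\<^sup>2 * (radial_coord x1 * radial_coord x2) = 16 * y\<^sup>2 * ((1 - x1) * (1 - x2)) * Q / Q\<^sup>2"
    using Q by (simp add: radial_coord_def Q_def power2_eq_square)
  also have "\<dots> \<le> (2 * (x1 + x2) * (1 - y\<^sup>2))\<^sup>2 / Q\<^sup>2"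
    by (rule divide_right_mono[OF key]) simp
  also have "\<dots> = ((1 - radial_coord x1 * radial_coord x2) * (1 - y\<^sup>2))\<^sup>2"
    using assms by (simp add: one_minus_radial_coord_mult Q_def power_divide power_mult_distrib)
  finally show ?thesis .
qed

section \<open>Sectors\<close>

definition sector_piece :: "real \<Rightarrow> real \<Rightarrow> real \<Rightarrow> complex \<Rightarrow> complex set" where
  "sector_piece a y \<eta> e = {u. y < radial_coord (cmod u) \<and> (1 - a) * radial_coord (cmod u) < (1 + a) * y
      \<and> cmod (u - of_real (cmod u) * e) < \<eta> * cmod u}"

lemma norm_diff_modulus_mult_less_iff:
  "cmod (u - of_real (cmod u) * e) < \<eta> * cmod u \<longleftrightarrow> u \<noteq> 0 \<and> cmod (sgn u - e) < \<eta>"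
proof -
  have "u - of_real (cmod u) * e = of_real (cmod u) * (sgn u - e)"
    by (cases "u = 0") (simp_all add: complex_sgn_def scaleR_conv_of_real algebra_simps)
  then show ?thesis
    by (cases "u = 0") (simp_all add: norm_mult mult.commute[of \<eta>])
qed

lemma open_sector_piece: "open (sector_piece a y \<eta> e)"
proof -
  have "continuous_on UNIV (\<lambda>u. radial_coord (cmod u))"
    unfolding radial_coord_def
    by (intro continuous_intros) (smt (verit) norm_ge_zero)
  then show ?thesis
    unfolding sector_piece_def Collect_conj_eq
    by (intro open_Int open_Collect_less continuous_intros) auto
qed

lemma sector_piece_subset_ball:
  assumes "0 \<le> y"
  shows "sector_piece a y \<eta> e \<subseteq> ball 0 1"
proof
  fix u assume "u \<in> sector_piece a y \<eta> e"
  then have "0 < radial_coord (cmod u)"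
    using assms by (simp add: sector_piece_def)
  then show "u \<in> ball 0 1"
    by (simp add: radial_coord_pos_iff)
qed

lemma pseudo_diam_le_sector_piece:
  assumes "0 \<le> \<alpha>" and "\<alpha> \<le> 1" and "0 \<le> a" and "0 < y"
    and "a\<^sup>2 + (1 - \<alpha>\<^sup>2) * (\<eta> * (1 - y\<^sup>2) / (2 * y))\<^sup>2 \<le> \<alpha>\<^sup>2"
  shows "pseudo_diam_le \<alpha> (sector_piece a y \<eta> e)"
  unfolding pseudo_diam_le_def
proof (intro ballI)
  fix u1 u2 assume "u1 \<in> sector_piece a y \<eta> e" "u2 \<in> sector_piece a y \<eta> e"
  define x1 where "x1 = radial_coord (cmod u1)"
  define x2 where "x2 = radial_coord (cmod u2)"
  define p where "p = cmod u1 * cmod u2"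
  have x: "y < x1" "(1 - a) * x1 < (1 + a) * y" "y < x2" "(1 - a) * x2 < (1 + a) * y"
    and sgn: "cmod (sgn u1 - e) < \<eta>" "cmod (sgn u2 - e) < \<eta>"
    using \<open>u1 \<in> _\<close> \<open>u2 \<in> _\<close> by (auto simp: sector_piece_def norm_diff_modulus_mult_less_iff x1_def x2_def)
  have t: "cmod u1 = radial_coord x1" "cmod u2 = radial_coord x2"
    by (simp_all add: x1_def x2_def radial_coord_radial_coord add_pos_nonneg)
  have "\<bar>x1 - x2\<bar> \<le> a * (x1 + x2)"
    using x assms(3) mult_left_mono[of y x1 "1 + a"] mult_left_mono[of y x2 "1 + a"]
    by (simp add: abs_le_iff algebra_simps)
  then have "\<bar>cmod u1 - cmod u2\<bar> \<le> a * (1 - p)"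
    unfolding t p_def using x assms(4) by (intro abs_radial_coord_diff_le) auto
  then have radial: "(cmod u1 - cmod u2)\<^sup>2 \<le> a\<^sup>2 * (1 - p)\<^sup>2"
    using power_mono[of "\<bar>cmod u1 - cmod u2\<bar>" "a * (1 - p)" 2] by (simp add: power_mult_distrib)
  have "cmod (sgn u1 - sgn u2) \<le> 2 * \<eta>"
    using norm_triangle_ineq4[of "sgn u1 - e" "sgn u2 - e"] sgn by simp
  then have "(cmod (sgn u1 - sgn u2))\<^sup>2 \<le> (2 * \<eta>)\<^sup>2"
    by (rule power_mono) simp
  then have "p * (cmod (sgn u1 - sgn u2))\<^sup>2 \<le> p * (2 * \<eta>)\<^sup>2"
    by (rule mult_left_mono) (simp add: p_def)
  also have "\<dots> = (\<eta> / (2 * y))\<^sup>2 * (16 * y\<^sup>2 * p)"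
    using assms(4) by (simp add: field_simps power2_eq_square)
  also have "\<dots> \<le> (\<eta> / (2 * y))\<^sup>2 * ((1 - p) * (1 - y\<^sup>2))\<^sup>2"
    unfolding t p_def using x assms(4) x1_def x2_def
    by (intro mult_left_mono radial_coord_mult_le) (auto simp: radial_coord_le_1)
  finally have angular: "p * (cmod (sgn u1 - sgn u2))\<^sup>2 \<le> (\<eta> * (1 - y\<^sup>2) / (2 * y))\<^sup>2 * (1 - p)\<^sup>2"
    by (simp add: power_mult_distrib power_divide mult_ac)
  show "cmod (u1 - u2) \<le> \<alpha> * cmod (1 - u1 * cnj u2)"
    using assms(1,2,5) radial angular unfolding p_def by (rule pseudo_dist_le_of_polar_bounds)
qed

lemma norm_cis_diff_le: "cmod (cis a - cis b) \<le> \<bar>a - b\<bar>"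
proof -
  have "cis a - cis b = cis b * (exp (\<i> * of_real (a - b)) - 1)"
    by (simp add: cis_conv_exp algebra_simps flip: exp_add)
  then have "cmod (cis a - cis b) = 2 * \<bar>sin ((a - b) / 2)\<bar>"
    using dist_exp_i_1[of "a - b"] by (simp add: norm_mult)
  also have "\<dots> \<le> \<bar>a - b\<bar>"
    using abs_sin_x_le_abs_x[of "(a - b) / 2"] by simp
  finally show ?thesis .
qed

lemma exists_root_of_unity_near:
  assumes "M > 0"
  shows "\<exists>k<M. cmod (cis \<theta> - cis (2 * pi * real k / real M)) \<le> pi / real M"
proof -
  define n where "n = round (\<theta> * real M / (2 * pi))"
  define k where "k = nat (n mod int M)"
  have "k < M"
    using assms by (simp add: k_def nat_less_iff)
  have "int k = n - n div int M * int M"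
    using assms by (simp add: k_def minus_div_mult_eq_mod)
  then have "real k = of_int n - of_int (n div int M) * real M"
    by (metis of_int_diff of_int_mult of_int_of_nat_eq)
  then have "2 * pi * real k / real M = 2 * pi * (of_int n - of_int (n div int M) * real M) / real M"
    by simp
  also have "\<dots> = 2 * pi * of_int n / real M - 2 * pi * of_int (n div int M)"
    using assms by (simp add: field_simps)
  finally have "cis (2 * pi * real k / real M) = cis (2 * pi * of_int n / real M)"
    by (simp add: cis_divide[symmetric] Ints_of_int)
  moreover have "\<bar>\<theta> - 2 * pi * of_int n / real M\<bar> \<le> pi / real M"
  proof -
    have "\<theta> - 2 * pi * of_int n / real M = (2 * pi / real M) * (\<theta> * real M / (2 * pi) - of_int n)"
      using assms by (simp add: field_simps)
    moreover have "\<bar>\<theta> * real M / (2 * pi) - of_int n\<bar> \<le> 1 / 2"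
      unfolding n_def using of_int_round_abs_le by (simp add: abs_minus_commute)
    ultimately show ?thesis
      using assms by (simp add: abs_mult) (simp add: field_simps)
  qed
  ultimately show ?thesis
    using \<open>k < M\<close> norm_cis_diff_le[of \<theta> "2 * pi * of_int n / real M"] by auto
qed

(* With b = eta (1 - y^2) / (2 y) this gives (3 alpha / 5)^2 + (1 - alpha^2) b^2 = alpha^2,
   the hypothesis of pseudo_diam_le_sector_piece for a = 3 alpha / 5. *)
definition sector_halfwidth :: "real \<Rightarrow> real \<Rightarrow> real" where
  "sector_halfwidth \<alpha> y = 8/5 * \<alpha> * y / (sqrt (1 - \<alpha>\<^sup>2) * (1 - y\<^sup>2))"

definition sector_count :: "real \<Rightarrow> real \<Rightarrow> nat" where
  "sector_count \<alpha> y = nat \<lfloor>pi / sector_halfwidth \<alpha> y\<rfloor> + 1"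

definition band_ratio :: "real \<Rightarrow> real" where
  "band_ratio \<alpha> = (2 + \<alpha>) / (2 - \<alpha>)"

definition band_sectors :: "real \<Rightarrow> real \<Rightarrow> complex set set" where
  "band_sectors \<alpha> y = (\<lambda>k. sector_piece (3/5 * \<alpha>) y (sector_halfwidth \<alpha> y)
      (cis (2 * pi * real k / real (sector_count \<alpha> y)))) ` {..<sector_count \<alpha> y}"

lemma sector_halfwidth_pos:
  assumes "0 < \<alpha>" "\<alpha> < 1" "0 < y" "y < 1"
  shows "0 < sector_halfwidth \<alpha> y"
  using assms by (simp add: sector_halfwidth_def abs_square_less_1)

lemma one_less_band_ratio: "0 < \<alpha> \<Longrightarrow> \<alpha> < 2 \<Longrightarrow> 1 < band_ratio \<alpha>"
  by (simp add: band_ratio_def)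

lemma finite_band_sectors: "finite (band_sectors \<alpha> y)"
  by (simp add: band_sectors_def)

lemma card_band_sectors_le: "card (band_sectors \<alpha> y) \<le> sector_count \<alpha> y"
  unfolding band_sectors_def using card_image_le[of "{..<sector_count \<alpha> y}"] by simp

lemma band_sectors_small:
  assumes "0 < \<alpha>" "\<alpha> < 1" "0 < y" "y < 1" and "S \<in> band_sectors \<alpha> y"
  shows "open S \<and> S \<subseteq> ball 0 1 \<and> pseudo_diam_le \<alpha> S"
proof -
  have "0 < 1 - \<alpha>\<^sup>2" "0 < 1 - y\<^sup>2"
    using assms by (simp_all add: abs_square_less_1)
  define b where "b = sector_halfwidth \<alpha> y * (1 - y\<^sup>2) / (2 * y)"
  have "b = 4/5 * \<alpha> / sqrt (1 - \<alpha>\<^sup>2)"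
    using assms \<open>0 < 1 - y\<^sup>2\<close> \<open>0 < 1 - \<alpha>\<^sup>2\<close> by (simp add: b_def sector_halfwidth_def field_simps)
  then have "b\<^sup>2 = (4/5 * \<alpha>)\<^sup>2 / (1 - \<alpha>\<^sup>2)"
    using \<open>0 < 1 - \<alpha>\<^sup>2\<close> by (simp add: power_divide)
  then have "(1 - \<alpha>\<^sup>2) * b\<^sup>2 = (4/5 * \<alpha>)\<^sup>2"
    using \<open>0 < 1 - \<alpha>\<^sup>2\<close> by simp
  then have "(3/5 * \<alpha>)\<^sup>2 + (1 - \<alpha>\<^sup>2) * b\<^sup>2 = \<alpha>\<^sup>2"
    by (simp add: power2_eq_square field_simps)
  moreover obtain e where "S = sector_piece (3/5 * \<alpha>) y (sector_halfwidth \<alpha> y) e"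
    using assms(5) by (auto simp: band_sectors_def)
  ultimately show ?thesis
    using assms open_sector_piece sector_piece_subset_ball pseudo_diam_le_sector_piece[of \<alpha> "3/5 * \<alpha>" y]
    by (simp add: b_def)
qed

lemma band_covered_by_sectors:
  assumes "0 < \<alpha>" "\<alpha> < 1" "0 < y" "y < 1" and "u \<noteq> 0"
    and "y < radial_coord (cmod u)" and "radial_coord (cmod u) \<le> band_ratio \<alpha> * y"
  shows "\<exists>S\<in>band_sectors \<alpha> y. u \<in> S"
proof -
  define M where "M = sector_count \<alpha> y"
  define \<eta> where "\<eta> = sector_halfwidth \<alpha> y"
  have "0 < \<eta>"
    using sector_halfwidth_pos[OF assms(1-4)] by (simp add: \<eta>_def)
  then have "pi / \<eta> < real M"
    by (simp add: M_def \<eta>_def sector_count_def) linarith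
  then have "pi / real M < \<eta>"
    using \<open>0 < \<eta>\<close> by (simp add: M_def sector_count_def field_simps)
  moreover obtain k where "k < M" and "cmod (cis (Arg u) - cis (2 * pi * real k / real M)) \<le> pi / real M"
    using exists_root_of_unity_near[of M "Arg u"] by (auto simp: M_def sector_count_def)
  ultimately have "cmod (sgn u - cis (2 * pi * real k / real M)) < \<eta>"
    using assms(5) by (simp add: cis_Arg)
  moreover have "(1 - 3/5 * \<alpha>) * radial_coord (cmod u) < (1 + 3/5 * \<alpha>) * y"
  proof -
    have "(1 - 3/5 * \<alpha>) * radial_coord (cmod u) \<le> (1 - 3/5 * \<alpha>) * (band_ratio \<alpha> * y)"
      using assms by (intro mult_left_mono) auto
    also have "\<dots> < (1 + 3/5 * \<alpha>) * y"
      using assms by (simp add: band_ratio_def field_simps)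
    finally show ?thesis .
  qed
  ultimately have "u \<in> sector_piece (3/5 * \<alpha>) y \<eta> (cis (2 * pi * real k / real M))"
    using assms(5,6) by (simp add: sector_piece_def norm_diff_modulus_mult_less_iff)
  then show ?thesis
    using \<open>k < M\<close> by (auto simp: band_sectors_def M_def \<eta>_def)
qed

section \<open>Counting the sectors\<close>

lemma sector_count_le:
  assumes "0 < \<alpha>" "\<alpha> < 1" "0 < y" "y < 1"
  shows "real (sector_count \<alpha> y) \<le> (2 - \<alpha>\<^sup>2) * (1 - y\<^sup>2) / (\<alpha> * y) + 1"
proof -
  define s where "s = sqrt (1 - \<alpha>\<^sup>2)"
  have "0 < s" "0 < 1 - y\<^sup>2"
    using assms by (simp_all add: s_def abs_square_less_1)
  have "(1 - \<alpha>\<^sup>2 / 2)\<^sup>2 = 1 - \<alpha>\<^sup>2 + (\<alpha>\<^sup>2)\<^sup>2 / 4"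
    by (simp add: power2_eq_square algebra_simps)
  then have "sqrt (1 - \<alpha>\<^sup>2) \<le> sqrt ((1 - \<alpha>\<^sup>2 / 2)\<^sup>2)"
    using zero_le_power2[of "\<alpha>\<^sup>2"] by (intro real_sqrt_le_mono) linarith
  moreover have "0 \<le> 1 - \<alpha>\<^sup>2 / 2"
    using assms power_le_one[of \<alpha> 2] by simp
  ultimately have "s \<le> 1 - \<alpha>\<^sup>2 / 2"
    by (simp add: s_def)
  moreover have "pi \<le> 16/5"
    using pi_approx(2) by simp
  ultimately have "pi * s \<le> 16/5 * (1 - \<alpha>\<^sup>2 / 2)"
    using \<open>0 < s\<close> by (intro mult_mono) auto
  then have "pi * s * (1 - y\<^sup>2) / (8/5 * \<alpha> * y) \<le> 16/5 * (1 - \<alpha>\<^sup>2 / 2) * (1 - y\<^sup>2) / (8/5 * \<alpha> * y)"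
    using assms \<open>0 < 1 - y\<^sup>2\<close> by (intro divide_right_mono mult_right_mono) auto
  also have "\<dots> = (2 - \<alpha>\<^sup>2) * (1 - y\<^sup>2) / (\<alpha> * y)"
    using assms by (simp add: field_simps)
  also have "pi * s * (1 - y\<^sup>2) / (8/5 * \<alpha> * y) = pi / sector_halfwidth \<alpha> y"
    by (simp add: sector_halfwidth_def s_def)
  finally have "pi / sector_halfwidth \<alpha> y \<le> (2 - \<alpha>\<^sup>2) * (1 - y\<^sup>2) / (\<alpha> * y)" .
  moreover have "0 \<le> pi / sector_halfwidth \<alpha> y"
    using sector_halfwidth_pos[OF assms] by simp
  ultimately show ?thesis
    using of_int_floor_le[of "pi / sector_halfwidth \<alpha> y"] by (simp add: sector_count_def del: of_int_floor_le)
qed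

lemma sector_budget_step_poly:
  fixes a y :: real
  assumes "0 < a" "a < 1" "0 < y" "y < 1"
  shows "(2 + a) * ((2 - a\<^sup>2) * (1 - y\<^sup>2) + a * y) \<le> 5"
proof -
  have "0 \<le> (1 - a\<^sup>2) * y\<^sup>2"
    using assms by (simp add: abs_square_le_1)
  then have "(2 - a\<^sup>2) * (1 - y\<^sup>2) + a * y \<le> 2 - 3/4 * a\<^sup>2"
    using zero_le_power2[of "y - a / 2"] by (simp add: power2_eq_square algebra_simps)
  then have "(2 + a) * ((2 - a\<^sup>2) * (1 - y\<^sup>2) + a * y) \<le> (2 + a) * (2 - 3/4 * a\<^sup>2)"
    using assms by (intro mult_left_mono) auto
  also have "\<dots> = 14/3 - 3/2 * (a - 2/3)\<^sup>2 - 3/4 * a ^ 3"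
    by (simp add: power2_eq_square power3_eq_cube algebra_simps)
  also have "\<dots> \<le> 5"
    using assms zero_le_power2[of "a - 2/3"] zero_le_power[of a 3] by linarith
  finally show ?thesis .
qed

lemma sector_budget_cubic_nonneg:
  fixes a :: real
  assumes "0 < a" "a < 1"
  shows "0 \<le> 50 - 85 * a + 44 * a ^ 3"
proof -
  have "125 * (50 - 85 * a + 44 * a ^ 3) = 44 * (5 * a - 4)\<^sup>2 * (5 * a + 8) + (618 - 65 * a)"
    by (simp add: power2_eq_square power3_eq_cube algebra_simps)
  then show ?thesis
    using assms zero_le_power2[of "5 * a - 4"] by (smt (verit) mult_nonneg_nonneg)
qed

lemma sector_budget_slope_le:
  fixes a :: real
  assumes "0 < a" "a < 1"
  shows "4 * a * (2 - a\<^sup>2) \<le> 5 + 2 * a\<^sup>2"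
proof -
  have "27 * (5 + 2 * a\<^sup>2 - 4 * a * (2 - a\<^sup>2)) = (3 * a - 2)\<^sup>2 * (12 * a + 22) + 47"
    by (simp add: power2_eq_square algebra_simps)
  then show ?thesis
    using assms zero_le_power2[of "3 * a - 2"] by (smt (verit) mult_nonneg_nonneg)
qed

lemma sector_budget_base_poly:
  fixes a y :: real
  assumes a: "0 < a" "a < 1" and y: "0 < y" "y \<le> (5 - 2 * a) / (5 + 2 * a)"
  shows "2 * a * (2 - a\<^sup>2) * (1 - y\<^sup>2) + 2 * a\<^sup>2 * y \<le> 5 * (1 - y)"
proof -
  define X where "X = (5 - 2 * a) / (5 + 2 * a)"
  define f where "f y = 5 * (1 - y) - 2 * a * (2 - a\<^sup>2) * (1 - y\<^sup>2) - 2 * a\<^sup>2 * y" for y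
  have "X \<le> 1"
    using a by (simp add: X_def)
  have "0 \<le> f X"
  proof -
    have XD: "X * (5 + 2 * a) = 5 - 2 * a"
      using a by (simp add: X_def)
    have "(5 + 2 * a)\<^sup>2 * f X = 5 * (5 + 2 * a) * ((5 + 2 * a) - X * (5 + 2 * a))
        - 2 * a * (2 - a\<^sup>2) * ((5 + 2 * a)\<^sup>2 - (X * (5 + 2 * a))\<^sup>2) - 2 * a\<^sup>2 * (X * (5 + 2 * a)) * (5 + 2 * a)"
      by (simp add: f_def power2_eq_square algebra_simps)
    also have "\<dots> = 2 * a * (50 - 85 * a + 44 * a ^ 3)"
      unfolding XD by (simp add: power2_eq_square power3_eq_cube algebra_simps)
    finally have fX: "(5 + 2 * a)\<^sup>2 * f X = 2 * a * (50 - 85 * a + 44 * a ^ 3)" .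
    have "0 \<le> 2 * a * (50 - 85 * a + 44 * a ^ 3)"
      using a sector_budget_cubic_nonneg[OF a] by (intro mult_nonneg_nonneg) auto
    then have "(5 + 2 * a)\<^sup>2 * 0 \<le> (5 + 2 * a)\<^sup>2 * f X"
      by (simp only: fX mult_zero_right)
    moreover have "0 < (5 + 2 * a)\<^sup>2"
      using a by simp
    ultimately show ?thesis
      using mult_le_cancel_left_pos by blast
  qed
  moreover have "f X \<le> f y"
  proof -
    have "4 * a * (2 - a\<^sup>2) \<le> 5 + 2 * a\<^sup>2"
      by (rule sector_budget_slope_le[OF a])
    moreover have "2 * a * (2 - a\<^sup>2) * (y + X) \<le> 4 * a * (2 - a\<^sup>2)"
    proof -
      have "0 \<le> a * (2 - a\<^sup>2)"
        using a power_le_one[of a 2] by (intro mult_nonneg_nonneg) auto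
      then show ?thesis
        using y \<open>X \<le> 1\<close> mult_left_mono[of "y + X" 2 "a * (2 - a\<^sup>2)"] by (simp add: X_def)
    qed
    moreover have "y \<le> X"
      using y(2) unfolding X_def .
    ultimately have "0 \<le> (X - y) * (5 + 2 * a\<^sup>2 - 2 * a * (2 - a\<^sup>2) * (y + X))"
      by (intro mult_nonneg_nonneg) linarith+
    also have "\<dots> = f y - f X"
      by (simp add: f_def power2_eq_square algebra_simps)
    finally show ?thesis
      by simp
  qed
  ultimately show ?thesis
    by (simp add: f_def)
qed

lemma sector_budget_step:
  assumes "0 < \<alpha>" "\<alpha> < 1" "0 < y" "y < 1"
  shows "(2 - \<alpha>\<^sup>2) * (1 - y\<^sup>2) / (\<alpha> * y) + 1
      + 5 / (2 * \<alpha>\<^sup>2) * (1 - band_ratio \<alpha> * y) / (band_ratio \<alpha> * y)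
    \<le> 5 / (2 * \<alpha>\<^sup>2) * (1 - y) / y"
proof -
  define c where "c = 5 / (2 * \<alpha>\<^sup>2)"
  define l where "l = band_ratio \<alpha>"
  have "0 < l" "1 - 1 / l = 2 * \<alpha> / (2 + \<alpha>)"
    using assms by (simp_all add: l_def band_ratio_def field_simps)
  have "c * (1 - y) / y - c * (1 - l * y) / (l * y) = c * (1 / y) * (1 - 1 / l)"
    using assms \<open>0 < l\<close> by (simp add: field_simps)
  also have "\<dots> = 5 / (2 + \<alpha>) / (\<alpha> * y)"
    unfolding \<open>1 - 1 / l = _\<close> c_def using assms by (simp add: divide_simps power2_eq_square)
  finally have "c * (1 - y) / y - c * (1 - l * y) / (l * y) = 5 / (2 + \<alpha>) / (\<alpha> * y)" .
  moreover have "(2 - \<alpha>\<^sup>2) * (1 - y\<^sup>2) / (\<alpha> * y) + 1 = ((2 - \<alpha>\<^sup>2) * (1 - y\<^sup>2) + \<alpha> * y) / (\<alpha> * y)"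
    using assms by (simp add: field_simps)
  moreover have "(2 - \<alpha>\<^sup>2) * (1 - y\<^sup>2) + \<alpha> * y \<le> 5 / (2 + \<alpha>)"
    using sector_budget_step_poly[OF assms] assms by (simp add: pos_le_divide_eq mult.commute)
  then have "((2 - \<alpha>\<^sup>2) * (1 - y\<^sup>2) + \<alpha> * y) / (\<alpha> * y) \<le> 5 / (2 + \<alpha>) / (\<alpha> * y)"
    using assms by (intro divide_right_mono) auto
  ultimately show ?thesis
    unfolding c_def l_def by linarith
qed

lemma sector_budget_base:
  assumes "0 < \<alpha>" "\<alpha> < 1" "0 < y" "y \<le> radial_coord (2/5 * \<alpha>)"
  shows "(2 - \<alpha>\<^sup>2) * (1 - y\<^sup>2) / (\<alpha> * y) + 1 \<le> 5 / (2 * \<alpha>\<^sup>2) * (1 - y) / y"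
proof -
  have y_le: "y \<le> (5 - 2 * \<alpha>) / (5 + 2 * \<alpha>)"
    using assms by (simp add: radial_coord_def field_simps)
  have "(2 - \<alpha>\<^sup>2) * (1 - y\<^sup>2) / (\<alpha> * y) + 1
      = (2 * \<alpha> * (2 - \<alpha>\<^sup>2) * (1 - y\<^sup>2) + 2 * \<alpha>\<^sup>2 * y) / (2 * \<alpha>\<^sup>2 * y)"
    using assms by (simp add: field_simps power2_eq_square)
  also have "\<dots> \<le> 5 * (1 - y) / (2 * \<alpha>\<^sup>2 * y)"
    using sector_budget_base_poly[OF assms(1,2,3) y_le] assms by (intro divide_right_mono) auto
  also have "\<dots> = 5 / (2 * \<alpha>\<^sup>2) * (1 - y) / y"
    by simp
  finally show ?thesis .
qed

lemma sum_sector_count_le: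
  assumes "0 < \<alpha>" "\<alpha> < 1" "0 < y" "y * band_ratio \<alpha> ^ n < radial_coord (2/5 * \<alpha>)"
  shows "(\<Sum>j\<le>n. real (sector_count \<alpha> (y * band_ratio \<alpha> ^ j))) \<le> 5 / (2 * \<alpha>\<^sup>2) * (1 - y) / y"
  using assms(3,4)
proof (induction n arbitrary: y)
  case 0
  have "radial_coord (2/5 * \<alpha>) < 1"
    using assms(1) by (simp add: radial_coord_def)
  then show ?case
    using 0 sector_count_le[OF assms(1,2)] sector_budget_base[OF assms(1,2), of y] by fastforce
next
  case (Suc n)
  define l where "l = band_ratio \<alpha>"
  have "1 < l"
    using assms by (simp add: l_def one_less_band_ratio)
  have "1 \<le> l ^ Suc n"
    using \<open>1 < l\<close> by (intro one_le_power) simp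
  then have "y \<le> y * l ^ Suc n"
    using Suc.prems(1) by simp
  moreover have "radial_coord (2/5 * \<alpha>) < 1"
    using assms(1) by (simp add: radial_coord_def)
  ultimately have "y < 1"
    using Suc.prems(2) unfolding l_def by linarith
  have "(\<Sum>j\<le>Suc n. real (sector_count \<alpha> (y * l ^ j)))
      = real (sector_count \<alpha> y) + (\<Sum>j\<le>n. real (sector_count \<alpha> (l * y * l ^ j)))"
    by (simp add: sum.atMost_Suc_shift mult_ac del: sum.atMost_Suc)
  also have "\<dots> \<le> (2 - \<alpha>\<^sup>2) * (1 - y\<^sup>2) / (\<alpha> * y) + 1 + 5 / (2 * \<alpha>\<^sup>2) * (1 - l * y) / (l * y)"
    using sector_count_le[OF assms(1,2) Suc.prems(1) \<open>y < 1\<close>] Suc.IH[of "l * y"] Suc.prems \<open>1 < l\<close>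
    by (simp add: l_def mult_ac)
  also have "\<dots> \<le> 5 / (2 * \<alpha>\<^sup>2) * (1 - y) / y"
    using sector_budget_step[OF assms(1,2) Suc.prems(1) \<open>y < 1\<close>] by (simp add: l_def)
  finally show ?case
    by (simp add: l_def)
qed

lemma sum_sector_count_below_le:
  assumes "0 < \<alpha>" "\<alpha> < 1" "0 < y" "y \<le> 1"
  defines "J \<equiv> {j. y * band_ratio \<alpha> ^ j < radial_coord (2/5 * \<alpha>)}"
  shows "finite J" and "(\<Sum>j\<in>J. real (sector_count \<alpha> (y * band_ratio \<alpha> ^ j))) \<le> 5 / (2 * \<alpha>\<^sup>2) * (1 - y) / y"
proof -
  have "1 < band_ratio \<alpha>"
    using assms by (simp add: one_less_band_ratio)
  have down: "j \<in> J" if "j \<le> k" "k \<in> J" for j k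
  proof -
    have "y * band_ratio \<alpha> ^ j \<le> y * band_ratio \<alpha> ^ k"
      using that \<open>1 < band_ratio \<alpha>\<close> assms(3) by (simp add: power_increasing)
    then show ?thesis
      using that by (simp add: J_def)
  qed
  obtain n where "radial_coord (2/5 * \<alpha>) / y < band_ratio \<alpha> ^ n"
    using real_arch_pow[OF \<open>1 < band_ratio \<alpha>\<close>] by blast
  then have "n \<notin> J"
    using assms(3) by (simp add: J_def divide_less_eq mult.commute)
  then have "J \<subseteq> {..<n}"
    using down by (meson lessThan_iff not_le subsetI)
  then show "finite J"
    by (rule finite_subset) simp
  show "(\<Sum>j\<in>J. real (sector_count \<alpha> (y * band_ratio \<alpha> ^ j))) \<le> 5 / (2 * \<alpha>\<^sup>2) * (1 - y) / y"
  proof (cases "J = {}")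
    case True
    then show ?thesis
      using assms by simp
  next
    case False
    define m where "m = Max J"
    have "m \<in> J"
      using \<open>finite J\<close> False by (simp add: m_def)
    then have "J = {..m}"
      using \<open>finite J\<close> down by (auto simp: m_def)
    moreover have "y * band_ratio \<alpha> ^ m < radial_coord (2/5 * \<alpha>)"
      using \<open>m \<in> J\<close> by (simp add: J_def)
    ultimately show ?thesis
      using sum_sector_count_le[OF assms(1-3)] by simp
  qed
qed

section \<open>The covering\<close>

lemma exists_geometric_band:
  fixes x0 l x :: real
  assumes "0 < x0" and "1 < l" and "x0 < x"
  obtains j where "x0 * l ^ j < x" and "x \<le> x0 * l ^ Suc j"
proof -
  obtain n where "x / x0 < l ^ n"
    using real_arch_pow[OF assms(2)] by blast
  then have ex: "\<exists>n. x \<le> x0 * l ^ n"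
    using assms(1) by (auto simp: divide_less_eq mult.commute intro: less_imp_le)
  define n0 where "n0 = (LEAST n. x \<le> x0 * l ^ n)"
  have n0: "x \<le> x0 * l ^ n0"
    unfolding n0_def by (rule LeastI_ex[OF ex])
  then obtain j where j: "n0 = Suc j"
    using assms(3) by (cases n0) auto
  then have "\<not> x \<le> x0 * l ^ j"
    unfolding n0_def by (metis lessI not_less_Least)
  then show thesis
    using that[of j] n0 j by (simp add: not_le)
qed

lemma annulus_covered_by_bands:
  assumes "0 < \<alpha>" "\<alpha> < 1" "0 < x0" "u \<noteq> 0"
    and "x0 < radial_coord (cmod u)" and "radial_coord (cmod u) \<le> radial_coord (2/5 * \<alpha>)"
  obtains j where "x0 * band_ratio \<alpha> ^ j < radial_coord (2/5 * \<alpha>)"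
    and "\<exists>S\<in>band_sectors \<alpha> (x0 * band_ratio \<alpha> ^ j). u \<in> S"
proof -
  have "1 < band_ratio \<alpha>"
    using assms by (simp add: one_less_band_ratio)
  then obtain j where j: "x0 * band_ratio \<alpha> ^ j < radial_coord (cmod u)"
      "radial_coord (cmod u) \<le> x0 * band_ratio \<alpha> ^ Suc j"
    using exists_geometric_band[OF assms(3) _ assms(5)] by blast
  have below: "x0 * band_ratio \<alpha> ^ j < radial_coord (2/5 * \<alpha>)"
    using j(1) assms(6) by linarith
  moreover have "radial_coord (2/5 * \<alpha>) < 1"
    using assms(1) by (simp add: radial_coord_def)
  ultimately have y: "0 < x0 * band_ratio \<alpha> ^ j" "x0 * band_ratio \<alpha> ^ j < 1"
    using assms(3) \<open>1 < band_ratio \<alpha>\<close> by simp_all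
  have "radial_coord (cmod u) \<le> band_ratio \<alpha> * (x0 * band_ratio \<alpha> ^ j)"
    using j(2) by (simp add: mult_ac)
  then show thesis
    using that[OF below] band_covered_by_sectors[OF assms(1,2) y assms(4) j(1)] by blast
qed

lemma card_insert_UN_le:
  "finite J \<Longrightarrow> card (insert A (\<Union>j\<in>J. B j)) \<le> 1 + (\<Sum>j\<in>J. card (B j))"
  using card_insert_le_m1[of "Suc (\<Sum>j\<in>J. card (B j))" "\<Union>j\<in>J. B j" A] card_UN_le[of J B] by simp

definition cover_pieces :: "real \<Rightarrow> real \<Rightarrow> complex set set" where
  "cover_pieces \<alpha> \<rho> = insert (ball 0 (2/5 * \<alpha>))
     (\<Union>j\<in>{j. radial_coord \<rho> * band_ratio \<alpha> ^ j < radial_coord (2/5 * \<alpha>)}.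
        band_sectors \<alpha> (radial_coord \<rho> * band_ratio \<alpha> ^ j))"

lemma finite_cover_pieces:
  assumes "0 < \<alpha>" "\<alpha> < 1" "0 < \<rho>" "\<rho> < 1"
  shows "finite (cover_pieces \<alpha> \<rho>)"
  using sum_sector_count_below_le(1)[OF assms(1,2) radial_coord_bounds(1)[OF assms(3,4)]]
    radial_coord_bounds(2)[OF assms(3,4)]
  by (simp add: cover_pieces_def finite_band_sectors)

lemma cover_pieces_small:
  assumes "0 < \<alpha>" "\<alpha> < 1" "0 < \<rho>" "\<rho> < 1" and "S \<in> cover_pieces \<alpha> \<rho>"
  shows "open S \<and> S \<subseteq> ball 0 1 \<and> pseudo_diam_le \<alpha> S"
proof (cases "S = ball 0 (2/5 * \<alpha>)")
  case True
  then show ?thesis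
    using assms pseudo_diam_le_central_ball by auto
next
  case False
  then obtain j where j: "radial_coord \<rho> * band_ratio \<alpha> ^ j < radial_coord (2/5 * \<alpha>)"
    and "S \<in> band_sectors \<alpha> (radial_coord \<rho> * band_ratio \<alpha> ^ j)"
    using assms(5) unfolding cover_pieces_def by blast
  moreover have "0 < band_ratio \<alpha>" "radial_coord (2/5 * \<alpha>) < 1"
    using assms by (simp_all add: band_ratio_def radial_coord_def)
  ultimately show ?thesis
    using assms radial_coord_bounds(1)[OF assms(3,4)]
      band_sectors_small[of \<alpha> "radial_coord \<rho> * band_ratio \<alpha> ^ j"]
    by simp
qed

lemma ball_subset_cover_pieces:
  assumes "0 < \<alpha>" "\<alpha> < 1" "0 < \<rho>" "\<rho> < 1"
  shows "ball 0 \<rho> \<subseteq> \<Union>(cover_pieces \<alpha> \<rho>)"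
proof
  fix u :: complex assume "u \<in> ball 0 \<rho>"
  show "u \<in> \<Union>(cover_pieces \<alpha> \<rho>)"
  proof (cases "cmod u < 2/5 * \<alpha>")
    case True
    then show ?thesis
      by (simp add: cover_pieces_def)
  next
    case False
    then have "u \<noteq> 0" "radial_coord \<rho> < radial_coord (cmod u)"
        "radial_coord (cmod u) \<le> radial_coord (2/5 * \<alpha>)"
      using assms \<open>u \<in> ball 0 \<rho>\<close> by (auto simp: radial_coord_less_iff not_less le_less)
    then show ?thesis
      using annulus_covered_by_bands[OF assms(1,2) radial_coord_bounds(1)[OF assms(3,4)], of u]
      by (auto simp: cover_pieces_def)
  qed
qed

lemma card_cover_pieces_le:
  assumes "0 < \<alpha>" "\<alpha> < 1" "0 < \<rho>" "\<rho> < 1"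
  shows "real (card (cover_pieces \<alpha> \<rho>)) \<le> 1 + 5 * \<rho> / (\<alpha>\<^sup>2 * (1 - \<rho>))"
proof -
  define x0 where "x0 = radial_coord \<rho>"
  define J where "J = {j. x0 * band_ratio \<alpha> ^ j < radial_coord (2/5 * \<alpha>)}"
  note x0 = radial_coord_bounds[OF assms(3,4), folded x0_def]
  note J = sum_sector_count_below_le[OF assms(1,2) x0(1) less_imp_le[OF x0(2)], folded J_def]
  have "card (cover_pieces \<alpha> \<rho>) \<le> 1 + (\<Sum>j\<in>J. card (band_sectors \<alpha> (x0 * band_ratio \<alpha> ^ j)))"
    unfolding cover_pieces_def x0_def[symmetric] J_def[symmetric] by (rule card_insert_UN_le[OF J(1)])
  also have "\<dots> \<le> 1 + (\<Sum>j\<in>J. sector_count \<alpha> (x0 * band_ratio \<alpha> ^ j))"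
    by (intro add_left_mono sum_mono card_band_sectors_le)
  finally have "real (card (cover_pieces \<alpha> \<rho>)) \<le> 1 + (\<Sum>j\<in>J. real (sector_count \<alpha> (x0 * band_ratio \<alpha> ^ j)))"
    using of_nat_mono by fastforce
  also have "\<dots> \<le> 1 + 5 / (2 * \<alpha>\<^sup>2) * (1 - x0) / x0"
    using J(2) by simp
  also have "5 / (2 * \<alpha>\<^sup>2) * (1 - x0) / x0 = 5 * \<rho> / (\<alpha>\<^sup>2 * (1 - \<rho>))"
    using assms by (simp add: x0_def radial_coord_def divide_simps)
  finally show ?thesis .
qed

lemma disk_cover:
  assumes "0 < \<alpha>" "\<alpha> < 1" "0 < r" "r < r1"
  obtains F :: "complex set set" where "finite F"
    and "\<And>S. S \<in> F \<Longrightarrow> open S \<and> S \<subseteq> ball 0 r1 \<and> disk_diam r1 S \<le> \<alpha>"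
    and "ball 0 r \<subseteq> \<Union>F"
    and "real (card F) \<le> 1 + 5 * r / (\<alpha>\<^sup>2 * (r1 - r))"
proof -
  have "0 < r1" "0 < r / r1" "r / r1 < 1"
    using assms by simp_all
  define G where "G = cover_pieces \<alpha> (r / r1)"
  note G = finite_cover_pieces[OF assms(1,2) \<open>0 < r / r1\<close> \<open>r / r1 < 1\<close>, folded G_def]
    cover_pieces_small[OF assms(1,2) \<open>0 < r / r1\<close> \<open>r / r1 < 1\<close>, folded G_def]
    ball_subset_cover_pieces[OF assms(1,2) \<open>0 < r / r1\<close> \<open>r / r1 < 1\<close>, folded G_def]
    card_cover_pieces_le[OF assms(1,2) \<open>0 < r / r1\<close> \<open>r / r1 < 1\<close>, folded G_def]
  show thesis
  proof
    show "finite ((`) ((*\<^sub>R) r1) ` G)"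
      using G(1) by simp
    show "open S \<and> S \<subseteq> ball 0 r1 \<and> disk_diam r1 S \<le> \<alpha>" if "S \<in> (`) ((*\<^sub>R) r1) ` G" for S
    proof -
      from that obtain T where S_eq: "S = (*\<^sub>R) r1 ` T" and "T \<in> G"
        by (rule imageE)
      then show ?thesis
        using G(2)[OF \<open>T \<in> G\<close>] \<open>0 < r1\<close> assms(1)
        by (simp add: open_scaling scaleR_image_subset_ball disk_diam_scaleR_le)
    qed
    show "ball 0 r \<subseteq> \<Union> ((`) ((*\<^sub>R) r1) ` G)"
      using ball_subset_scaleR_image[OF \<open>0 < r1\<close> G(3)] by (simp add: image_Union)
    have "5 * (r / r1) / (\<alpha>\<^sup>2 * (1 - r / r1)) = 5 * r / (\<alpha>\<^sup>2 * (r1 - r))"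
      using \<open>0 < r1\<close> by (simp add: field_simps)
    then show "real (card ((`) ((*\<^sub>R) r1) ` G)) \<le> 1 + 5 * r / (\<alpha>\<^sup>2 * (r1 - r))"
      using G(4) card_image_le[OF G(1), of "(`) ((*\<^sub>R) r1)"] by linarith
  qed
qed

lemma finite_family_reindex:
  assumes "finite F" and "card F \<le> N" and "P {}" and "\<And>S. S \<in> F \<Longrightarrow> P S" and "B \<subseteq> \<Union>F"
  shows "\<exists>W :: nat \<Rightarrow> 'a set. (\<forall>i\<in>{1..N}. P (W i)) \<and> B \<subseteq> (\<Union>i\<in>{1..N}. W i)"
proof -
  obtain h where h: "bij_betw h {1..card F} F"
    using ex_bij_betw_nat_finite_1[OF assms(1)] by blast
  define W where "W i = (if i \<le> card F then h i else {})" for i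
  have "F = h ` {1..card F}"
    using h by (simp add: bij_betw_def)
  also have "\<dots> \<subseteq> W ` {1..N}"
    using assms(2) by (auto simp: W_def)
  finally have "B \<subseteq> (\<Union>i\<in>{1..N}. W i)"
    by (rule subset_trans[OF assms(5) Union_mono])
  moreover have "\<forall>i\<in>{1..N}. P (W i)"
    using assms(3,4) bij_betw_apply[OF h] by (auto simp: W_def)
  ultimately show ?thesis
    by (intro exI[of _ W] conjI)
qed

theorem mainTheorem12:
  fixes \<epsilon> r r1 \<alpha> :: real and N :: nat
  assumes "\<epsilon> > 0" and "r > 0" and "r1 = (1 + \<epsilon>) * r"
    and "0 < \<alpha>" and "\<alpha> < 1"
    and "real N > 5 / (\<alpha>^2 * \<epsilon>)"
  shows "\<exists>W :: nat \<Rightarrow> complex set.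
           (\<forall>i\<in>{1..N}. open (W i) \<and> W i \<subseteq> ball 0 r1 \<and> disk_diam r1 (W i) \<le> \<alpha>)
         \<and> ball 0 r \<subseteq> (\<Union>i\<in>{1..N}. W i)"
proof -
  have r1_r: "r1 - r = \<epsilon> * r"
    using assms(3) by (simp add: algebra_simps)
  then have "r < r1"
    using mult_pos_pos[OF assms(1,2)] by linarith
  obtain F where F: "finite F" "\<And>S. S \<in> F \<Longrightarrow> open S \<and> S \<subseteq> ball 0 r1 \<and> disk_diam r1 S \<le> \<alpha>"
      "ball 0 r \<subseteq> \<Union>F" "real (card F) \<le> 1 + 5 * r / (\<alpha>\<^sup>2 * (r1 - r))"
    using disk_cover[OF assms(4,5,2) \<open>r < r1\<close>] by blast
  have "5 * r / (\<alpha>\<^sup>2 * (r1 - r)) = 5 / (\<alpha>^2 * \<epsilon>)"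
    using assms(1,2,4) unfolding r1_r by (simp add: field_simps)
  then have "card F \<le> N"
    using F(4) assms(6) by linarith
  show ?thesis
    by (rule finite_family_reindex[where P = "\<lambda>S. open S \<and> S \<subseteq> ball 0 r1 \<and> disk_diam r1 S \<le> \<alpha>",
          OF F(1) \<open>card F \<le> N\<close> _ F(2) F(3)])
      (use assms(4) in simp)
qed

end
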